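(* Let $A$ be a cubical set. If the morphism $A\to A^{\mathbb{I}}$, $a\mapsto\lambda\_.a$ (the exponential transpose of the projection $A\times\mathbb{I}\to A$) is an isomorphism, then $A\cong\Delta(a)$ for some set $a$.
   Context: $\mathcal{C}$ is the category of cubes: objects finite sets of names, morphisms $I\to J$ functions $J\to\mathrm{dM}(I)$ with $\mathrm{dM}(I)$ the free De Morgan algebra on $I$, composition by substitution. Cubical sets are presheaves on $\mathcal{C}$; $\mathbb{I}$ is the presheaf $I\mapsto\mathrm{dM}(I)$. $\Delta:\mathrm{Set}\to\widehat{\mathcal{C}}$ is the constant presheaf functor. *)

theory Defs
  imports Main "HOL-Library.FuncSet"
begin

datatype dmt = DVar nat | DZero | DOne | DMeet dmt dmt | DJoin dmt dmt | DNeg dmt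

inductive dm_eq :: "dmt \<Rightarrow> dmt \<Rightarrow> bool" where
  dm_refl: "dm_eq x x"
| dm_sym: "dm_eq x y \<Longrightarrow> dm_eq y x"
| dm_trans: "dm_eq x y \<Longrightarrow> dm_eq y z \<Longrightarrow> dm_eq x z"
| cong_meet: "dm_eq x x' \<Longrightarrow> dm_eq y y' \<Longrightarrow> dm_eq (DMeet x y) (DMeet x' y')"
| cong_join: "dm_eq x x' \<Longrightarrow> dm_eq y y' \<Longrightarrow> dm_eq (DJoin x y) (DJoin x' y')"
| cong_neg: "dm_eq x x' \<Longrightarrow> dm_eq (DNeg x) (DNeg x')"
| meet_assoc: "dm_eq (DMeet (DMeet x y) z) (DMeet x (DMeet y z))"
| join_assoc: "dm_eq (DJoin (DJoin x y) z) (DJoin x (DJoin y z))"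
| meet_comm: "dm_eq (DMeet x y) (DMeet y x)"
| join_comm: "dm_eq (DJoin x y) (DJoin y x)"
| meet_absorb: "dm_eq (DMeet x (DJoin x y)) x"
| join_absorb: "dm_eq (DJoin x (DMeet x y)) x"
| distrib: "dm_eq (DMeet x (DJoin y z)) (DJoin (DMeet x y) (DMeet x z))"
| join_zero: "dm_eq (DJoin x DZero) x"
| meet_one: "dm_eq (DMeet x DOne) x"
| neg_neg: "dm_eq (DNeg (DNeg x)) x"
| de_morgan: "dm_eq (DNeg (DMeet x y)) (DJoin (DNeg x) (DNeg y))"
| neg_zero: "dm_eq (DNeg DZero) DOne"

quotient_type dm = dmt / dm_eq
  morphisms rep_dm abs_dm
  by (rule equivpI; rule reflpI sympI transpI) (auto intro: dm_eq.intros)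

fun dvars :: "dmt \<Rightarrow> nat set" where
  "dvars (DVar i) = {i}"
| "dvars DZero = {}"
| "dvars DOne = {}"
| "dvars (DMeet x y) = dvars x \<union> dvars y"
| "dvars (DJoin x y) = dvars x \<union> dvars y"
| "dvars (DNeg x) = dvars x"

fun tsubst :: "(nat \<Rightarrow> dmt) \<Rightarrow> dmt \<Rightarrow> dmt" where
  "tsubst s (DVar i) = s i"
| "tsubst s DZero = DZero"
| "tsubst s DOne = DOne"
| "tsubst s (DMeet x y) = DMeet (tsubst s x) (tsubst s y)"
| "tsubst s (DJoin x y) = DJoin (tsubst s x) (tsubst s y)"
| "tsubst s (DNeg x) = DNeg (tsubst s x)"

text \<open>dM(I): the free De Morgan algebra on the finite set of names I
  (as a subalgebra of the free De Morgan algebra on all names).\<close>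
definition dM :: "nat set \<Rightarrow> dm set" where
  "dM I = {x. \<exists>t. x = abs_dm t \<and> dvars t \<subseteq> I}"

definition dm_var :: "nat \<Rightarrow> dm" where
  "dm_var i = abs_dm (DVar i)"

text \<open>Substitution (well defined on classes since dm_eq is a congruence closed under substitution).\<close>
definition dm_subst :: "(nat \<Rightarrow> dm) \<Rightarrow> dm \<Rightarrow> dm" where
  "dm_subst s x = abs_dm (tsubst (rep_dm \<circ> s) (rep_dm x))"

text \<open>Morphisms I \<rightarrow> J: functions J \<rightarrow> dM(I) (extensional outside J).\<close>
definition hom :: "nat set \<Rightarrow> nat set \<Rightarrow> (nat \<Rightarrow> dm) set" where
  "hom I J = (J \<rightarrow>\<^sub>E dM I)"

definition cid :: "nat set \<Rightarrow> nat \<Rightarrow> dm" where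
  "cid I = restrict dm_var I"

text \<open>For f : I \<rightarrow> J and g : J \<rightarrow> K, cmp K f g = g \<circ> f : I \<rightarrow> K (substitution).\<close>
definition cmp :: "nat set \<Rightarrow> (nat \<Rightarrow> dm) \<Rightarrow> (nat \<Rightarrow> dm) \<Rightarrow> nat \<Rightarrow> dm" where
  "cmp K f g = restrict (\<lambda>k. dm_subst f (g k)) K"

definition cubical_set ::
  "(nat set \<Rightarrow> 'a set) \<Rightarrow> (nat set \<Rightarrow> nat set \<Rightarrow> (nat \<Rightarrow> dm) \<Rightarrow> 'a \<Rightarrow> 'a) \<Rightarrow> bool" where
  "cubical_set A0 Ar \<longleftrightarrow>
     (\<forall>I J f a. finite I \<and> finite J \<and> f \<in> hom I J \<and> a \<in> A0 J \<longrightarrow> Ar I J f a \<in> A0 I) \<and>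
     (\<forall>I a. finite I \<and> a \<in> A0 I \<longrightarrow> Ar I I (cid I) a = a) \<and>
     (\<forall>I J K f g a. finite I \<and> finite J \<and> finite K \<and> f \<in> hom I J \<and> g \<in> hom J K \<and> a \<in> A0 K
        \<longrightarrow> Ar I J f (Ar J K g a) = Ar I K (cmp K f g) a)"

definition nat_trans ::
  "(nat set \<Rightarrow> 'a set) \<Rightarrow> (nat set \<Rightarrow> nat set \<Rightarrow> (nat \<Rightarrow> dm) \<Rightarrow> 'a \<Rightarrow> 'a) \<Rightarrow>
   (nat set \<Rightarrow> 'b set) \<Rightarrow> (nat set \<Rightarrow> nat set \<Rightarrow> (nat \<Rightarrow> dm) \<Rightarrow> 'b \<Rightarrow> 'b) \<Rightarrow>
   (nat set \<Rightarrow> 'a \<Rightarrow> 'b) \<Rightarrow> bool" where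
  "nat_trans A0 Ar B0 Br \<eta> \<longleftrightarrow>
     (\<forall>I a. finite I \<and> a \<in> A0 I \<longrightarrow> \<eta> I a \<in> B0 I) \<and>
     (\<forall>I J f a. finite I \<and> finite J \<and> f \<in> hom I J \<and> a \<in> A0 J
        \<longrightarrow> \<eta> I (Ar I J f a) = Br I J f (\<eta> J a))"

definition nat_iso ::
  "(nat set \<Rightarrow> 'a set) \<Rightarrow> (nat set \<Rightarrow> nat set \<Rightarrow> (nat \<Rightarrow> dm) \<Rightarrow> 'a \<Rightarrow> 'a) \<Rightarrow>
   (nat set \<Rightarrow> 'b set) \<Rightarrow> (nat set \<Rightarrow> nat set \<Rightarrow> (nat \<Rightarrow> dm) \<Rightarrow> 'b \<Rightarrow> 'b) \<Rightarrow>
   (nat set \<Rightarrow> 'a \<Rightarrow> 'b) \<Rightarrow> bool" where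
  "nat_iso A0 Ar B0 Br \<eta> \<longleftrightarrow> nat_trans A0 Ar B0 Br \<eta> \<and>
     (\<exists>\<theta>. nat_trans B0 Br A0 Ar \<theta> \<and>
        (\<forall>I a. finite I \<and> a \<in> A0 I \<longrightarrow> \<theta> I (\<eta> I a) = a) \<and>
        (\<forall>I b. finite I \<and> b \<in> B0 I \<longrightarrow> \<eta> I (\<theta> I b) = b))"

definition isomorphic ::
  "(nat set \<Rightarrow> 'a set) \<Rightarrow> (nat set \<Rightarrow> nat set \<Rightarrow> (nat \<Rightarrow> dm) \<Rightarrow> 'a \<Rightarrow> 'a) \<Rightarrow>
   (nat set \<Rightarrow> 'b set) \<Rightarrow> (nat set \<Rightarrow> nat set \<Rightarrow> (nat \<Rightarrow> dm) \<Rightarrow> 'b \<Rightarrow> 'b) \<Rightarrow> bool" where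
  "isomorphic A0 Ar B0 Br \<longleftrightarrow> (\<exists>\<eta>. nat_iso A0 Ar B0 Br \<eta>)"

definition Delta0 :: "'a set \<Rightarrow> nat set \<Rightarrow> 'a set" where
  "Delta0 a I = a"

definition DeltaR :: "nat set \<Rightarrow> nat set \<Rightarrow> (nat \<Rightarrow> dm) \<Rightarrow> 'a \<Rightarrow> 'a" where
  "DeltaR I J f x = x"

text \<open>(A^\<I>)(I) = Hom(y(I) \<times> \<I>, A): natural families
  \<theta>_K : Hom(K,I) \<times> dM(K) \<rightarrow> A(K), extensional (undefined off their domain).\<close>
definition Exp0 ::
  "(nat set \<Rightarrow> 'a set) \<Rightarrow> (nat set \<Rightarrow> nat set \<Rightarrow> (nat \<Rightarrow> dm) \<Rightarrow> 'a \<Rightarrow> 'a) \<Rightarrow>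
   nat set \<Rightarrow> (nat set \<Rightarrow> (nat \<Rightarrow> dm) \<times> dm \<Rightarrow> 'a) set" where
  "Exp0 A0 Ar I = {\<theta>.
     (\<forall>K x. \<not> (finite K \<and> x \<in> hom K I \<times> dM K) \<longrightarrow> \<theta> K x = undefined) \<and>
     (\<forall>K f r. finite K \<and> f \<in> hom K I \<and> r \<in> dM K \<longrightarrow> \<theta> K (f, r) \<in> A0 K) \<and>
     (\<forall>K L g f r. finite K \<and> finite L \<and> g \<in> hom L K \<and> f \<in> hom K I \<and> r \<in> dM K \<longrightarrow>
        \<theta> L (cmp I g f, dm_subst g r) = Ar L K g (\<theta> K (f, r)))}"

text \<open>Restriction along h : J \<rightarrow> I: precomposition with y(h) \<times> id.\<close>
definition ExpR ::
  "nat set \<Rightarrow> nat set \<Rightarrow> (nat \<Rightarrow> dm) \<Rightarrow> (nat set \<Rightarrow> (nat \<Rightarrow> dm) \<times> dm \<Rightarrow> 'a)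
   \<Rightarrow> (nat set \<Rightarrow> (nat \<Rightarrow> dm) \<times> dm \<Rightarrow> 'a)" where
  "ExpR J I h \<theta> = (\<lambda>K x. if finite K \<and> x \<in> hom K J \<times> dM K
                          then \<theta> K (cmp I (fst x) h, snd x) else undefined)"

definition const_map ::
  "(nat set \<Rightarrow> nat set \<Rightarrow> (nat \<Rightarrow> dm) \<Rightarrow> 'a \<Rightarrow> 'a) \<Rightarrow>
   nat set \<Rightarrow> 'a \<Rightarrow> (nat set \<Rightarrow> (nat \<Rightarrow> dm) \<times> dm \<Rightarrow> 'a)" where
  "const_map Ar I a = (\<lambda>K x. if finite K \<and> x \<in> hom K I \<times> dM K
                              then Ar K I (fst x) a else undefined)"

end

theory Submission
  imports Defs
begin

text \<open>An element \<open>b\<close> of \<open>A(J \<union> {i})\<close> is a line in direction \<open>i\<close>, that is an element of \<open>A\<^sup>\<I>(J)\<close>.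
  If the constant map \<open>A \<rightarrow> A\<^sup>\<I>\<close> is invertible, this line is constant, so \<open>b\<close> is a degeneracy of an
  element of \<open>A(J)\<close>. By induction on \<open>J\<close>, every element of \<open>A(J)\<close> is the restriction of an
  element of \<open>A(\<emptyset>)\<close> along the unique map \<open>J \<rightarrow> \<emptyset>\<close>. That map has a section (send every name
  to \<open>0\<close>), so restriction from \<open>A(\<emptyset>)\<close> is a natural bijection, and \<open>A \<cong> \<Delta>(A(\<emptyset>))\<close>.\<close>

lemma dm_eq_rep_abs: "dm_eq (rep_dm (abs_dm t)) t"
  using Quotient3_abs_rep[OF Quotient3_dm, of "abs_dm t"] dm.abs_eq_iff by blast

lemma dm_eq_tsubst: "dm_eq x y \<Longrightarrow> dm_eq (tsubst s x) (tsubst s y)"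
proof (induction rule: dm_eq.induct)
qed (simp_all add: dm_eq.intros(1,4-), erule dm_sym, erule (1) dm_trans)

lemma dm_eq_tsubst_vars:
  "(\<And>v. v \<in> dvars t \<Longrightarrow> dm_eq (s v) (s' v)) \<Longrightarrow> dm_eq (tsubst s t) (tsubst s' t)"
  by (induction t) (simp_all add: dm_eq.intros(1,4-))

lemma dvars_tsubst: "dvars (tsubst s t) = (\<Union>v\<in>dvars t. dvars (s v))"
  by (induction t) auto

lemma dm_subst_in_dM:
  assumes g: "g \<in> hom L K" and r: "r \<in> dM K"
  shows "dm_subst g r \<in> dM L"
proof -
  obtain t where t: "r = abs_dm t" "dvars t \<subseteq> K"
    using r unfolding dM_def by auto
  have "\<forall>k\<in>K. \<exists>u. g k = abs_dm u \<and> dvars u \<subseteq> L"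
    using g unfolding hom_def dM_def by auto
  then obtain s where s: "\<And>k. k \<in> K \<Longrightarrow> g k = abs_dm (s k) \<and> dvars (s k) \<subseteq> L"
    by metis
  have "dm_eq (tsubst (rep_dm \<circ> g) (rep_dm r)) (tsubst (rep_dm \<circ> g) t)"
    using t(1) dm_eq_rep_abs dm_eq_tsubst by blast
  moreover have "dm_eq (tsubst (rep_dm \<circ> g) t) (tsubst s t)"
    by (rule dm_eq_tsubst_vars) (use t(2) s dm_eq_rep_abs in auto)
  ultimately have "dm_subst g r = abs_dm (tsubst s t)"
    unfolding dm_subst_def dm.abs_eq_iff by (rule dm_trans)
  moreover have "dvars (tsubst s t) \<subseteq> L"
    using t(2) s by (auto simp: dvars_tsubst)
  ultimately show ?thesis
    unfolding dM_def by auto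
qed

lemma cmp_in_hom:
  assumes "g \<in> hom L K" and "f \<in> hom K J"
  shows "cmp J g f \<in> hom L J"
proof -
  have "\<forall>k\<in>J. dm_subst g (f k) \<in> dM L"
    using assms dm_subst_in_dM unfolding hom_def by blast
  then show ?thesis
    unfolding cmp_def hom_def by (simp add: restrict_PiE_iff)
qed

lemma dm_var_in_dM: "i \<in> I \<Longrightarrow> dm_var i \<in> dM I"
  unfolding dM_def dm_var_def by (intro CollectI exI[of _ "DVar i"]) auto

lemma restrict_dm_var_in_hom: "J \<subseteq> I \<Longrightarrow> restrict dm_var J \<in> hom I J"
  unfolding hom_def using dm_var_in_dM by auto

lemma zero_in_hom: "restrict (\<lambda>_. abs_dm DZero) I \<in> hom {} I"
  unfolding hom_def dM_def by auto

lemma hom_to_empty: "hom I {} = {\<lambda>_. undefined}"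
  unfolding hom_def by auto

lemma cmp_to_empty: "cmp {} f g = (\<lambda>_. undefined)"
  unfolding cmp_def by auto

lemma cid_empty: "cid {} = (\<lambda>_. undefined)"
  unfolding cid_def by auto

lemma cubical_set_restr_in:
  "cubical_set A0 Ar \<Longrightarrow> finite I \<Longrightarrow> finite J \<Longrightarrow> f \<in> hom I J \<Longrightarrow> a \<in> A0 J
    \<Longrightarrow> Ar I J f a \<in> A0 I"
  unfolding cubical_set_def by (drule conjunct1) simp

lemma cubical_set_restr_cid:
  "cubical_set A0 Ar \<Longrightarrow> finite I \<Longrightarrow> a \<in> A0 I \<Longrightarrow> Ar I I (cid I) a = a"
  unfolding cubical_set_def by (drule conjunct2, drule conjunct1) simp

lemma cubical_set_restr_cmp:
  "cubical_set A0 Ar \<Longrightarrow> finite I \<Longrightarrow> finite J \<Longrightarrow> finite K \<Longrightarrow> f \<in> hom I J \<Longrightarrow> g \<in> hom J K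
    \<Longrightarrow> a \<in> A0 K \<Longrightarrow> Ar I J f (Ar J K g a) = Ar I K (cmp K f g) a"
  unfolding cubical_set_def by (drule conjunct2, drule conjunct2) simp

lemma nat_iso_surj:
  assumes "nat_iso A0 Ar B0 Br \<eta>" and "finite I" and "b \<in> B0 I"
  shows "\<exists>a\<in>A0 I. \<eta> I a = b"
proof -
  obtain \<theta> where "nat_trans B0 Br A0 Ar \<theta>" and "\<forall>I b. finite I \<and> b \<in> B0 I \<longrightarrow> \<eta> I (\<theta> I b) = b"
    using assms(1) unfolding nat_iso_def by blast
  then have "\<theta> I b \<in> A0 I" and "\<eta> I (\<theta> I b) = b"
    using assms(2,3) unfolding nat_trans_def by simp_all
  then show ?thesis ..
qed

lemma const_map_apply:
  "finite K \<Longrightarrow> f \<in> hom K I \<Longrightarrow> r \<in> dM K \<Longrightarrow> const_map Ar I a K (f, r) = Ar K I f a"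
  by (simp add: const_map_def)

definition name_line ::
  "(nat set \<Rightarrow> nat set \<Rightarrow> (nat \<Rightarrow> dm) \<Rightarrow> 'a \<Rightarrow> 'a) \<Rightarrow> nat set \<Rightarrow> nat \<Rightarrow> 'a
    \<Rightarrow> (nat set \<Rightarrow> (nat \<Rightarrow> dm) \<times> dm \<Rightarrow> 'a)" where
  "name_line Ar J i b = (\<lambda>K x. if finite K \<and> x \<in> hom K J \<times> dM K
      then Ar K (insert i J) ((fst x)(i := snd x)) b else undefined)"

lemma fun_upd_in_hom: "f \<in> hom K J \<Longrightarrow> r \<in> dM K \<Longrightarrow> f(i := r) \<in> hom K (insert i J)"
  by (auto simp: hom_def PiE_def extensional_def)

lemma name_line_in_Exp0:
  assumes cs: "cubical_set A0 Ar" and J: "finite J" and i: "i \<notin> J"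
    and b: "b \<in> A0 (insert i J)"
  shows "name_line Ar J i b \<in> Exp0 A0 Ar J"
  unfolding Exp0_def
proof (intro CollectI conjI allI impI)
  fix K x assume "\<not> (finite K \<and> x \<in> hom K J \<times> dM K)"
  then show "name_line Ar J i b K x = undefined"
    unfolding name_line_def by argo
next
  fix K f r assume "finite K \<and> f \<in> hom K J \<and> r \<in> dM K"
  then show "name_line Ar J i b K (f, r) \<in> A0 K"
    using cubical_set_restr_in[OF cs _ _ fun_upd_in_hom b] J by (simp add: name_line_def)
next
  fix K L g f r assume a: "finite K \<and> finite L \<and> g \<in> hom L K \<and> f \<in> hom K J \<and> r \<in> dM K"
  have "(cmp J g f)(i := dm_subst g r) = cmp (insert i J) g (f(i := r))"
    using i by (auto simp: cmp_def fun_eq_iff)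
  moreover have "cmp J g f \<in> hom L J" "dm_subst g r \<in> dM L"
    using a cmp_in_hom dm_subst_in_dM by blast+
  ultimately have "name_line Ar J i b L (cmp J g f, dm_subst g r)
      = Ar L (insert i J) (cmp (insert i J) g (f(i := r))) b"
    using a by (simp add: name_line_def)
  also have "\<dots> = Ar L K g (Ar K (insert i J) (f(i := r)) b)"
    using cubical_set_restr_cmp[OF cs _ _ _ _ fun_upd_in_hom b] a J by simp
  finally show "name_line Ar J i b L (cmp J g f, dm_subst g r)
      = Ar L K g (name_line Ar J i b K (f, r))"
    using a by (simp add: name_line_def)
qed

lemma name_line_at_name:
  assumes cs: "cubical_set A0 Ar" and J: "finite J" and b: "b \<in> A0 (insert i J)"
  shows "name_line Ar J i b (insert i J) (restrict dm_var J, dm_var i) = b"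
proof -
  have "(restrict dm_var J)(i := dm_var i) = cid (insert i J)"
    by (auto simp: cid_def fun_eq_iff)
  then show ?thesis
    using restrict_dm_var_in_hom[of J "insert i J"] dm_var_in_dM[of i "insert i J"]
      cubical_set_restr_cid[OF cs _ b] J
    by (auto simp: name_line_def)
qed

lemma restr_insert_surj:
  assumes cs: "cubical_set A0 Ar"
    and iso: "nat_iso A0 Ar (Exp0 A0 Ar) ExpR (const_map Ar)"
    and J: "finite J" and i: "i \<notin> J" and b: "b \<in> A0 (insert i J)"
  shows "\<exists>a\<in>A0 J. b = Ar (insert i J) J (restrict dm_var J) a"
proof -
  obtain a where a: "a \<in> A0 J" "const_map Ar J a = name_line Ar J i b"
    using nat_iso_surj[OF iso J name_line_in_Exp0[OF cs J i b]] by blast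
  have "b = const_map Ar J a (insert i J) (restrict dm_var J, dm_var i)"
    using a(2) name_line_at_name[OF cs J b] by simp
  also have "\<dots> = Ar (insert i J) J (restrict dm_var J) a"
    using J by (intro const_map_apply restrict_dm_var_in_hom dm_var_in_dM) auto
  finally show ?thesis
    using a(1) by blast
qed

lemma restr_from_empty_surj:
  assumes cs: "cubical_set A0 Ar"
    and iso: "nat_iso A0 Ar (Exp0 A0 Ar) ExpR (const_map Ar)"
    and J: "finite J" and b: "b \<in> A0 J"
  shows "\<exists>c\<in>A0 {}. b = Ar J {} (\<lambda>_. undefined) c"
  using J b
proof (induction J arbitrary: b rule: finite_induct)
  case empty
  then show ?case
    using cubical_set_restr_cid[OF cs] cid_empty by fastforce
next
  case (insert i J)
  obtain a where a: "a \<in> A0 J" "b = Ar (insert i J) J (restrict dm_var J) a"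
    using restr_insert_surj[OF cs iso insert.hyps insert.prems] by blast
  obtain c where c: "c \<in> A0 {}" "a = Ar J {} (\<lambda>_. undefined) c"
    using insert.IH[OF a(1)] by blast
  have "b = Ar (insert i J) {} (cmp {} (restrict dm_var J) (\<lambda>_. undefined)) c"
    using cubical_set_restr_cmp[OF cs _ _ _ restrict_dm_var_in_hom[OF subset_insertI] _ c(1)]
      a c insert.hyps
    by (simp add: hom_to_empty)
  then show ?case
    using c(1) by (auto simp: cmp_to_empty)
qed

lemma restr_from_empty_natural:
  assumes cs: "cubical_set A0 Ar" and "finite I" "finite J" "f \<in> hom I J" "c \<in> A0 {}"
  shows "Ar I J f (Ar J {} (\<lambda>_. undefined) c) = Ar I {} (\<lambda>_. undefined) c"
  using cubical_set_restr_cmp[OF cs, of I J "{}" f "\<lambda>_. undefined" c] assms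
  by (simp add: hom_to_empty cmp_to_empty)

lemma restr_from_empty_retraction:
  assumes cs: "cubical_set A0 Ar" and "finite I" "z \<in> hom {} I" "c \<in> A0 {}"
  shows "Ar {} I z (Ar I {} (\<lambda>_. undefined) c) = c"
  using cubical_set_restr_cmp[OF cs, of "{}" I "{}" z "\<lambda>_. undefined" c]
    cubical_set_restr_cid[OF cs, of "{}" c] assms
  by (simp add: hom_to_empty cmp_to_empty cid_empty)

lemma isomorphic_Delta_if_restr_from_empty_surj:
  assumes cs: "cubical_set A0 Ar"
    and surj: "\<And>I b. finite I \<Longrightarrow> b \<in> A0 I \<Longrightarrow> \<exists>c\<in>A0 {}. b = Ar I {} (\<lambda>_. undefined) c"
  shows "isomorphic A0 Ar (Delta0 (A0 {})) DeltaR"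
proof -
  define z where "z I = restrict (\<lambda>_. abs_dm DZero) I" for I :: "nat set"
  have z: "z I \<in> hom {} I" for I
    unfolding z_def by (rule zero_in_hom)
  note natural = restr_from_empty_natural[OF cs]
  note retraction = restr_from_empty_retraction[OF cs _ z]
  define \<eta> where "\<eta> I = Ar {} I (z I)" for I
  define \<theta> where "\<theta> I = Ar I {} (\<lambda>_. undefined)" for I :: "nat set"
  have "nat_trans A0 Ar (Delta0 (A0 {})) DeltaR \<eta>"
    unfolding nat_trans_def Delta0_def DeltaR_def
  proof (intro conjI allI impI)
    fix I a assume "finite I \<and> a \<in> A0 I"
    then show "\<eta> I a \<in> A0 {}"
      unfolding \<eta>_def using cubical_set_restr_in[OF cs _ _ z] by simp
  next
    fix I J f a assume a: "finite I \<and> finite J \<and> f \<in> hom I J \<and> a \<in> A0 J"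
    then obtain c where "c \<in> A0 {}" "a = Ar J {} (\<lambda>_. undefined) c"
      using surj by blast
    then show "\<eta> I (Ar I J f a) = \<eta> J a"
      unfolding \<eta>_def using a natural retraction by simp
  qed
  moreover have "nat_trans (Delta0 (A0 {})) DeltaR A0 Ar \<theta>"
    unfolding nat_trans_def Delta0_def DeltaR_def \<theta>_def
    using cubical_set_restr_in[OF cs] hom_to_empty natural by auto
  moreover have "\<theta> I (\<eta> I a) = a" if "finite I" "a \<in> A0 I" for I a
    using surj[OF that] retraction that(1) unfolding \<theta>_def \<eta>_def by auto
  moreover have "\<eta> I (\<theta> I c) = c" if "finite I" "c \<in> Delta0 (A0 {}) I" for I c
    using retraction that unfolding \<theta>_def \<eta>_def Delta0_def by auto
  ultimately have "nat_iso A0 Ar (Delta0 (A0 {})) DeltaR \<eta>"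
    unfolding nat_iso_def by (intro conjI exI[of _ \<theta>]) simp_all
  then show ?thesis
    unfolding isomorphic_def by blast
qed

theorem mainTheorem3:
  fixes A0 :: "nat set \<Rightarrow> 'a set"
    and Ar :: "nat set \<Rightarrow> nat set \<Rightarrow> (nat \<Rightarrow> dm) \<Rightarrow> 'a \<Rightarrow> 'a"
  assumes "cubical_set A0 Ar"
    and "nat_iso A0 Ar (Exp0 A0 Ar) ExpR (const_map Ar)"
  shows "\<exists>a :: 'a set. isomorphic A0 Ar (Delta0 a) DeltaR"
  using isomorphic_Delta_if_restr_from_empty_surj[OF assms(1) restr_from_empty_surj[OF assms]]
  by (rule exI)

end
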